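(* Let $P$ be a $d$-simplex ($d\ge2$) in general position with vertices $v_1,\dots,v_{d+1}$. Then (i) for every $1\le i\le d$ and every $\sigma\in\mathfrak S_d$ with $\sigma(d)=i$, $\operatorname{sign}(F_i)=\operatorname{sign}\big(\det X(\sigma,d)/\det X(\sigma,d-1)\big)$; (ii) for every $\sigma\in\mathfrak S_d$, $\operatorname{sign}(F_{d+1})=-\operatorname{sign}\big(\det X(\sigma,d)/\det Y(\sigma,d)\big)=-\operatorname{sign}(z(\sigma,d))$.
   Context: Write $v_i=(x_{i,1},\dots,x_{i,d})$ and let $F_i$ be the facet of $P$ opposite $v_i$ (spanned by all vertices except $v_i$). For $\sigma\in\mathfrak S_d$ and $1\le k\le d$, $X(\sigma,k)$ is the $(k+1)\times(k+1)$ matrix whose $r$-th row is $(1,x_{\sigma(r),1},\dots,x_{\sigma(r),k})$ for $r=1,\dots,k$ and whose last row is $(1,x_{d+1,1},\dots,x_{d+1,k})$; $Y(\sigma,k)$ is the $k\times k$ matrix whose $r$-th row is $(1,x_{\sigma(r),1},\dots,x_{\sigma(r),k-1})$, $r=1,\dots,k$; and $z(\sigma,k)=\det X(\sigma,k)/\det Y(\sigma,k)$. $\pi$ forgets the last coordinate, $\pi^{(j)}$ the last $j$ coordinates. $P$ is in general position if for every $0\le k\le d-1$ and every $(k+1)$-subset $U$ of its vertices, $\pi^{(d-k)}(\mathrm{conv}(U))$ is a $k$-simplex. For $y\in\pi(P)$, $n(y,P),p(y,P)$ are the lowest and highest points of $P\cap\pi^{-1}(y)$ in the last coordinate; $NB(P)$,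 $PB(P)$ are the sets of all such points. A facet $F$ is positive ($\operatorname{sign}(F)=+1$) if some relative interior point of $F$ lies in $PB(P)$ and negative ($\operatorname{sign}(F)=-1$) if some relative interior point lies in $NB(P)$. *)

theory Defs
  imports "HOL-Analysis.Analysis"
begin

text \<open>Points of R^n are functions nat => real with coordinates 1..n (all other
  coordinates are 0).  Vertices v 1, ..., v (d+1); x_{i,j} = v i j.\<close>

type_synonym pt = "nat \<Rightarrow> real"

definition in_Rn :: "nat \<Rightarrow> pt \<Rightarrow> bool" where
  "in_Rn n p \<longleftrightarrow> (\<forall>k. (k = 0 \<or> n < k) \<longrightarrow> p k = 0)"

definition convc :: "pt set \<Rightarrow> pt set" where
  "convc S = {x. \<exists>\<mu>. (\<forall>p\<in>S. 0 \<le> \<mu> p) \<and> (\<Sum>p\<in>S. \<mu> p) = 1 \<and>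
                     x = (\<lambda>k. \<Sum>p\<in>S. \<mu> p * p k)}"

definition affhull :: "pt set \<Rightarrow> pt set" where
  "affhull S = {x. \<exists>T \<mu>. finite T \<and> T \<subseteq> S \<and> (\<Sum>p\<in>T. \<mu> p) = 1 \<and>
                        x = (\<lambda>k. \<Sum>p\<in>T. \<mu> p * p k)}"

definition aff_indep :: "pt set \<Rightarrow> bool" where
  "aff_indep S \<longleftrightarrow> (\<forall>\<mu>. (\<Sum>p\<in>S. \<mu> p) = 0 \<and> (\<lambda>k. \<Sum>p\<in>S. \<mu> p * p k) = (\<lambda>k. 0)
                        \<longrightarrow> (\<forall>p\<in>S. \<mu> p = 0))"

definition dist_n :: "nat \<Rightarrow> pt \<Rightarrow> pt \<Rightarrow> real" where
  "dist_n n x y = sqrt (\<Sum>k=1..n. (x k - y k)^2)"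

definition rel_interior_n :: "nat \<Rightarrow> pt set \<Rightarrow> pt set" where
  "rel_interior_n n S = {x\<in>S. \<exists>e>0. \<forall>y\<in>affhull S. dist_n n x y < e \<longrightarrow> y \<in> S}"

text \<open>proj m keeps the first m coordinates (R^n -> R^m); pi^(j) = proj (d - j).\<close>
definition proj :: "nat \<Rightarrow> pt \<Rightarrow> pt" where
  "proj m p = (\<lambda>k. if 1 \<le> k \<and> k \<le> m then p k else 0)"

definition is_simplex :: "nat \<Rightarrow> pt set \<Rightarrow> bool" where
  "is_simplex k S \<longleftrightarrow> (\<exists>W. finite W \<and> card W = k + 1 \<and> (\<forall>w\<in>W. in_Rn k w) \<and>
                           aff_indep W \<and> S = convc W)"

definition vertices :: "nat \<Rightarrow> (nat \<Rightarrow> pt) \<Rightarrow> pt set" where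
  "vertices d v = v ` {1..d+1}"

definition simplexP :: "nat \<Rightarrow> (nat \<Rightarrow> pt) \<Rightarrow> pt set" where
  "simplexP d v = convc (vertices d v)"

definition is_d_simplex :: "nat \<Rightarrow> (nat \<Rightarrow> pt) \<Rightarrow> bool" where
  "is_d_simplex d v \<longleftrightarrow> (\<forall>i\<in>{1..d+1}. in_Rn d (v i)) \<and> inj_on v {1..d+1} \<and>
                          aff_indep (vertices d v)"

definition general_position :: "nat \<Rightarrow> (nat \<Rightarrow> pt) \<Rightarrow> bool" where
  "general_position d v \<longleftrightarrow> (\<forall>k<d. \<forall>U. U \<subseteq> vertices d v \<and> card U = k + 1 \<longrightarrow>
                                   is_simplex k (proj k ` convc U))"

definition NB :: "nat \<Rightarrow> pt set \<Rightarrow> pt set" where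
  "NB d P = {x\<in>P. \<forall>z\<in>P. proj (d - 1) z = proj (d - 1) x \<longrightarrow> x d \<le> z d}"

definition PB :: "nat \<Rightarrow> pt set \<Rightarrow> pt set" where
  "PB d P = {x\<in>P. \<forall>z\<in>P. proj (d - 1) z = proj (d - 1) x \<longrightarrow> z d \<le> x d}"

definition facet :: "nat \<Rightarrow> (nat \<Rightarrow> pt) \<Rightarrow> nat \<Rightarrow> pt set" where
  "facet d v i = convc (v ` ({1..d+1} - {i}))"

definition positive_facet :: "nat \<Rightarrow> pt set \<Rightarrow> pt set \<Rightarrow> bool" where
  "positive_facet d P F \<longleftrightarrow> (\<exists>x\<in>rel_interior_n d F. x \<in> PB d P)"

definition negative_facet :: "nat \<Rightarrow> pt set \<Rightarrow> pt set \<Rightarrow> bool" where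
  "negative_facet d P F \<longleftrightarrow> (\<exists>x\<in>rel_interior_n d F. x \<in> NB d P)"

definition facet_sign_is :: "nat \<Rightarrow> pt set \<Rightarrow> pt set \<Rightarrow> real \<Rightarrow> bool" where
  "facet_sign_is d P F s \<longleftrightarrow> ((positive_facet d P F \<longleftrightarrow> s = 1) \<and> (negative_facet d P F \<longleftrightarrow> s = -1))"

definition detn :: "nat \<Rightarrow> (nat \<Rightarrow> nat \<Rightarrow> real) \<Rightarrow> real" where
  "detn n A = (\<Sum>p | p permutes {0..<n}. of_int (sign p) * (\<Prod>i<n. A i (p i)))"

text \<open>X(sigma,k): (k+1)x(k+1); row r (r<k) is (1, x_{sigma(r+1),1..k}), last row
  (1, x_{d+1,1..k}).  Y(sigma,k): k x k; row r is (1, x_{sigma(r+1),1..k-1}).\<close>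
definition Xmat :: "nat \<Rightarrow> (nat \<Rightarrow> pt) \<Rightarrow> (nat \<Rightarrow> nat) \<Rightarrow> nat \<Rightarrow> nat \<Rightarrow> nat \<Rightarrow> real" where
  "Xmat d v \<sigma> k = (\<lambda>r c. if c = 0 then 1 else if r < k then v (\<sigma> (r + 1)) c else v (d + 1) c)"

definition Ymat :: "(nat \<Rightarrow> pt) \<Rightarrow> (nat \<Rightarrow> nat) \<Rightarrow> nat \<Rightarrow> nat \<Rightarrow> real" where
  "Ymat v \<sigma> = (\<lambda>r c. if c = 0 then 1 else v (\<sigma> (r + 1)) c)"

definition detX :: "nat \<Rightarrow> (nat \<Rightarrow> pt) \<Rightarrow> (nat \<Rightarrow> nat) \<Rightarrow> nat \<Rightarrow> real" where
  "detX d v \<sigma> k = detn (k + 1) (Xmat d v \<sigma> k)"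

definition detY :: "(nat \<Rightarrow> pt) \<Rightarrow> (nat \<Rightarrow> nat) \<Rightarrow> nat \<Rightarrow> real" where
  "detY v \<sigma> k = detn k (Ymat v \<sigma>)"

definition zval :: "nat \<Rightarrow> (nat \<Rightarrow> pt) \<Rightarrow> (nat \<Rightarrow> nat) \<Rightarrow> nat \<Rightarrow> real" where
  "zval d v \<sigma> k = detX d v \<sigma> k / detY v \<sigma> k"

end

theory Submission
  imports Defs "Jordan_Normal_Form.Determinant"
begin

text \<open>
  List the vertices as \<open>p 0, \<dots>, p d\<close> = \<open>v (\<sigma> 1), \<dots>, v (\<sigma> d), v (d + 1)\<close> and let \<open>M\<close> be the
  matrix with rows \<open>(1, p r)\<close>. By Cramer's rule the cofactors \<open>C r c\<close> of \<open>M\<close> give the barycentric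
  coordinates \<open>\<lambda>\<^sub>r y = (\<Sum>c. (1, y)\<^sub>c C r c) / det M\<close>. The facet opposite \<open>p j\<close> is the part of the
  simplex where \<open>\<lambda>\<^sub>j\<close> vanishes, and along a vertical line \<open>\<lambda>\<^sub>j\<close> grows at the rate
  \<open>C j d / det M\<close>. So the simplex lies above the whole facet if this rate is positive and below it
  if it is negative, and from a relative interior point of the facet one can actually move into the
  simplex in that direction: the facet has sign \<open>- sgn (C j d / det M)\<close>. General position makes
  \<open>C j d \<noteq> 0\<close>, and expanding the cofactors gives \<open>C (d - 1) d = - det X(\<sigma>, d - 1)\<close> and
  \<open>C d d = det Y(\<sigma>, d)\<close>.
\<close>

unbundle no vec_syntax

lemma in_Rn_affine_comb: "(\<And>t. t \<in> T \<Longrightarrow> in_Rn n (q t)) \<Longrightarrow> in_Rn n (\<lambda>k. \<Sum>t\<in>T. \<mu> t * q t k)"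
  by (simp add: in_Rn_def)

lemma convc_image_iff:
  assumes "inj_on p J"
  shows "x \<in> convc (p ` J) \<longleftrightarrow>
    (\<exists>c. (\<forall>r\<in>J. 0 \<le> c r) \<and> sum c J = 1 \<and> x = (\<lambda>k. \<Sum>r\<in>J. c r * p r k))"
proof
  assume "x \<in> convc (p ` J)"
  then obtain \<mu> where "\<forall>t\<in>p ` J. 0 \<le> \<mu> t" "sum \<mu> (p ` J) = 1" "x = (\<lambda>k. \<Sum>t\<in>p ` J. \<mu> t * t k)"
    by (auto simp: convc_def)
  then show "\<exists>c. (\<forall>r\<in>J. 0 \<le> c r) \<and> sum c J = 1 \<and> x = (\<lambda>k. \<Sum>r\<in>J. c r * p r k)"
    using sum.reindex[OF assms] by (intro exI[of _ "\<mu> \<circ> p"]) auto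
next
  assume "\<exists>c. (\<forall>r\<in>J. 0 \<le> c r) \<and> sum c J = 1 \<and> x = (\<lambda>k. \<Sum>r\<in>J. c r * p r k)"
  then obtain c where c: "\<forall>r\<in>J. 0 \<le> c r" "sum c J = 1" "x = (\<lambda>k. \<Sum>r\<in>J. c r * p r k)"
    by blast
  define \<mu> where "\<mu> t = c (inv_into J p t)" for t
  have \<mu>: "\<mu> (p r) = c r" if "r \<in> J" for r
    using that assms by (simp add: \<mu>_def)
  have "sum \<mu> (p ` J) = 1" and "x = (\<lambda>k. \<Sum>t\<in>p ` J. \<mu> t * t k)"
    using c \<mu> by (simp_all add: sum.reindex[OF assms])
  moreover have "\<forall>t\<in>p ` J. 0 \<le> \<mu> t"
    using c \<mu> by auto
  ultimately show "x \<in> convc (p ` J)"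
    unfolding convc_def by blast
qed

lemma mem_convc_self:
  assumes "finite W" "w \<in> W"
  shows "w \<in> convc W"
proof -
  have "(\<Sum>t\<in>W. (if t = w then 1 else 0) * t k) = w k" for k
  proof -
    have "(\<Sum>t\<in>W. (if t = w then 1 else 0) * t k) = (\<Sum>t\<in>W. if t = w then w k else 0)"
      by (rule sum.cong) auto
    then show ?thesis
      using assms by simp
  qed
  then show ?thesis
    using assms unfolding convc_def
    by (intro CollectI exI[of _ "\<lambda>t. if t = w then 1 else 0"]) auto
qed

lemma affhull_line:
  assumes "x \<in> S" "w \<in> S"
  shows "(\<lambda>k. (1 - a) * x k + a * w k) \<in> affhull S"
proof (cases "x = w")
  case True
  then show ?thesis
    using assms unfolding affhull_def
    by (intro CollectI exI[of _ "{x}"] exI[of _ "\<lambda>_. 1"]) (auto simp: algebra_simps)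
next
  case False
  then show ?thesis
    using assms unfolding affhull_def
    by (intro CollectI exI[of _ "{x, w}"] exI[of _ "\<lambda>t. if t = x then 1 - a else a"]) auto
qed

lemma aff_indep_imageD:
  assumes "inj_on p I" "aff_indep (p ` I)"
    and "sum c I = 0" "\<And>k. (\<Sum>r\<in>I. c r * p r k) = 0" "r \<in> I"
  shows "c r = 0"
proof -
  define \<mu> where "\<mu> t = c (inv_into I p t)" for t
  have \<mu>: "\<mu> (p r) = c r" if "r \<in> I" for r
    using that assms(1) by (simp add: \<mu>_def)
  have "sum \<mu> (p ` I) = 0" "(\<lambda>k. \<Sum>t\<in>p ` I. \<mu> t * t k) = (\<lambda>k. 0)"
    using assms(3,4) \<mu> by (simp_all add: sum.reindex[OF assms(1)])
  then show ?thesis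
    using assms(2,5) \<mu> unfolding aff_indep_def by fastforce
qed

lemma dist_n_nonneg: "0 \<le> dist_n n x y"
  by (simp add: dist_n_def sum_nonneg)

lemma coord_le_dist_n:
  assumes "1 \<le> c" "c \<le> n"
  shows "\<bar>y c - x c\<bar> \<le> dist_n n x y"
proof -
  have "(x c - y c)\<^sup>2 \<le> (\<Sum>k=1..n. (x k - y k)\<^sup>2)"
    by (rule member_le_sum) (use assms in auto)
  then have "sqrt ((x c - y c)\<^sup>2) \<le> dist_n n x y"
    unfolding dist_n_def by (rule real_sqrt_le_mono)
  then show ?thesis
    by simp
qed

lemma dist_n_line: "dist_n n x (\<lambda>k. (1 - a) * x k + a * w k) = \<bar>a\<bar> * dist_n n x w"
proof -
  have "(\<Sum>k=1..n. (x k - ((1 - a) * x k + a * w k))\<^sup>2) = a\<^sup>2 * (\<Sum>k=1..n. (x k - w k)\<^sup>2)"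
    by (simp add: sum_distrib_left power2_eq_square algebra_simps)
  then show ?thesis
    by (simp add: dist_n_def real_sqrt_mult)
qed

lemma dist_n_update:
  assumes "1 \<le> m" "m \<le> n"
  shows "dist_n n x (x(m := x m + s)) = \<bar>s\<bar>"
proof -
  have "(\<Sum>k=1..n. (x k - (x(m := x m + s)) k)\<^sup>2) = (\<Sum>k=1..n. if k = m then s\<^sup>2 else 0)"
    by (intro sum.cong) auto
  also have "\<dots> = s\<^sup>2"
    using assms by simp
  finally show ?thesis
    by (simp add: dist_n_def)
qed

lemma proj_eqD:
  assumes "proj (n - 1) z = proj (n - 1) x" "1 \<le> k" "k < n"
  shows "z k = x k"
  using fun_cong[OF assms(1), of k] assms(2,3) by (auto simp: proj_def split: if_splits)

lemma finite_positive_lower_bound: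
  fixes f :: "'a \<Rightarrow> real"
  assumes "finite A" "\<And>a. a \<in> A \<Longrightarrow> 0 < f a"
  obtains m where "0 < m" "\<And>a. a \<in> A \<Longrightarrow> m \<le> f a"
proof (cases "A = {}")
  case True
  then show ?thesis
    using that[of 1] by simp
next
  case False
  show ?thesis
  proof (rule that)
    show "0 < Min (f ` A)"
      using assms False by simp
    show "Min (f ` A) \<le> f a" if "a \<in> A" for a
      using assms(1) that by simp
  qed
qed

section \<open>Homogeneous coordinates and the vertex matrix\<close>

definition hcoord :: "pt \<Rightarrow> nat \<Rightarrow> real" where
  "hcoord y c = (if c = 0 then 1 else y c)"

definition vertex_matrix :: "nat \<Rightarrow> (nat \<Rightarrow> pt) \<Rightarrow> real mat" where
  "vertex_matrix n p = mat (Suc n) (Suc n) (\<lambda>(r, c). hcoord (p r) c)"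

lemma vertex_matrix_carrier [simp]: "vertex_matrix n p \<in> carrier_mat (Suc n) (Suc n)"
  by (simp add: vertex_matrix_def)

lemma vertex_matrix_dim [simp]:
  "dim_row (vertex_matrix n p) = Suc n" "dim_col (vertex_matrix n p) = Suc n"
  by (simp_all add: vertex_matrix_def)

lemma vertex_matrix_mult_vec:
  assumes "r \<le> n" "a \<in> carrier_vec (Suc n)"
  shows "(vertex_matrix n p *\<^sub>v a) $ r = (\<Sum>c\<le>n. hcoord (p r) c * a $ c)"
  using assms by (auto simp: vertex_matrix_def scalar_prod_def atLeast0LessThan lessThan_Suc_atMost
      intro!: sum.cong)

lemma transpose_vertex_matrix_mult_vec:
  assumes "c \<le> n" "a \<in> carrier_vec (Suc n)"
  shows "((vertex_matrix n p)\<^sup>T *\<^sub>v a) $ c = (\<Sum>r\<le>n. hcoord (p r) c * a $ r)"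
  using assms by (auto simp: vertex_matrix_def scalar_prod_def atLeast0LessThan lessThan_Suc_atMost
      intro!: sum.cong)

lemma mat_delete_vertex_matrix_mult_vec:
  assumes "j \<le> n" "r \<le> n" "r \<noteq> j" "a \<in> carrier_vec n"
  shows "(mat_delete (vertex_matrix n p) j n *\<^sub>v a) $ (if r < j then r else r - 1)
       = (\<Sum>c<n. hcoord (p r) c * a $ c)"
  using assms
  by (auto simp: mat_delete_def vertex_matrix_def scalar_prod_def atLeast0LessThan intro!: sum.cong)

lemma detn_eq_det: "detn n A = det (mat n n (\<lambda>(i, j). A i j))"
  unfolding detn_def det_def
  by (auto intro!: sum.cong prod.cong simp: permutes_def atLeast0LessThan)

lemma cofactor_row_expansion_delta:
  assumes "A \<in> carrier_mat n n" "i < n" "j < n"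
  shows "(\<Sum>k<n. A $$ (i, k) * cofactor A j k) = (if i = j then det A else 0)"
proof -
  have "(A * adj_mat A) $$ (i, j) = (\<Sum>k<n. A $$ (i, k) * cofactor A j k)"
    using assms unfolding times_mat_def scalar_prod_def adj_mat_def by (auto intro: sum.cong)
  then show ?thesis
    using adj_mat(2)[OF assms(1)] assms by auto
qed

lemma cofactor_column_expansion_delta:
  assumes "A \<in> carrier_mat n n" "i < n" "j < n"
  shows "(\<Sum>k<n. A $$ (k, j) * cofactor A k i) = (if i = j then det A else 0)"
proof -
  have "(adj_mat A * A) $$ (i, j) = (\<Sum>k<n. A $$ (k, j) * cofactor A k i)"
    using assms unfolding times_mat_def scalar_prod_def adj_mat_def by (auto intro: sum.cong)
  then show ?thesis
    using adj_mat(3)[OF assms(1)] assms by auto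
qed

lemma hcoord_affine_comb:
  assumes "sum \<mu> T = 1"
  shows "hcoord (\<lambda>k. \<Sum>t\<in>T. \<mu> t * q t k) c = (\<Sum>t\<in>T. \<mu> t * hcoord (q t) c)"
  using assms by (simp add: hcoord_def)

lemma sum_hcoord_affine_comb:
  assumes "sum \<mu> T = 1"
  shows "(\<Sum>c\<in>C. hcoord (\<lambda>k. \<Sum>t\<in>T. \<mu> t * q t k) c * w c)
       = (\<Sum>t\<in>T. \<mu> t * (\<Sum>c\<in>C. hcoord (q t) c * w c))"
proof -
  have "(\<Sum>c\<in>C. hcoord (\<lambda>k. \<Sum>t\<in>T. \<mu> t * q t k) c * w c) = (\<Sum>c\<in>C. \<Sum>t\<in>T. \<mu> t * hcoord (q t) c * w c)"
    by (simp add: hcoord_affine_comb[OF assms] sum_distrib_right)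
  also have "\<dots> = (\<Sum>t\<in>T. \<mu> t * (\<Sum>c\<in>C. hcoord (q t) c * w c))"
    by (subst sum.swap) (simp add: sum_distrib_left mult.assoc)
  finally show ?thesis .
qed

lemma hcoord_line: "hcoord (\<lambda>k. (1 - a) * x k + a * w k) c = (1 - a) * hcoord x c + a * hcoord w c"
  by (simp add: hcoord_def algebra_simps)

lemma det_vertex_matrix_nonzero:
  assumes inj: "inj_on p {..n}" and in_Rn: "\<And>r. r \<le> n \<Longrightarrow> in_Rn n (p r)"
    and indep: "aff_indep (p ` {..n})"
  shows "det (vertex_matrix n p) \<noteq> 0"
proof
  assume "det (vertex_matrix n p) = 0"
  then have "det ((vertex_matrix n p)\<^sup>T) = 0"
    by (simp add: det_transpose[OF vertex_matrix_carrier])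
  then obtain w where w: "w \<in> carrier_vec (Suc n)" "w \<noteq> 0\<^sub>v (Suc n)"
    "(vertex_matrix n p)\<^sup>T *\<^sub>v w = 0\<^sub>v (Suc n)"
    using det_0_iff_vec_prod_zero[of "(vertex_matrix n p)\<^sup>T" "Suc n"] by auto
  have column: "(\<Sum>r\<le>n. hcoord (p r) c * w $ r) = 0" if "c \<le> n" for c
    using transpose_vertex_matrix_mult_vec[OF that w(1), of p] w(3) that by simp
  have "w $ r = 0" if "r \<le> n" for r
  proof (rule aff_indep_imageD[OF inj indep, of "\<lambda>r. w $ r"])
    show "(\<Sum>r\<le>n. w $ r) = 0"
      using column[of 0] by (simp add: hcoord_def)
    show "(\<Sum>r\<le>n. w $ r * p r k) = 0" for k
    proof (cases "1 \<le> k \<and> k \<le> n")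
      case True
      then show ?thesis
        using column[of k] by (simp add: hcoord_def mult.commute)
    next
      case False
      then have "p r k = 0" if "r \<le> n" for r
        using in_Rn[OF that] unfolding in_Rn_def by (cases "k = 0") auto
      then show ?thesis
        by simp
    qed
  qed (use that in auto)
  then have "w = 0\<^sub>v (Suc n)"
    using w(1) by (intro eq_vecI) auto
  with w(2) show False ..
qed

lemma affine_functional_vanishing_zero:
  assumes "finite W" "card W = Suc m" "\<And>w. w \<in> W \<Longrightarrow> in_Rn m w" "aff_indep W"
    and a: "a \<in> carrier_vec (Suc m)" and vanish: "\<And>w. w \<in> W \<Longrightarrow> (\<Sum>c\<le>m. hcoord w c * a $ c) = 0"
  shows "a = 0\<^sub>v (Suc m)"
proof (rule ccontr)
  assume "a \<noteq> 0\<^sub>v (Suc m)"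
  obtain f where f: "bij_betw f {..m} W"
    using ex_bij_betw_nat_finite[OF assms(1)] assms(2)
    by (metis atLeast0LessThan lessThan_Suc_atMost)
  have "(vertex_matrix m f *\<^sub>v a) $ r = 0" if "r \<le> m" for r
    using vertex_matrix_mult_vec[OF that a] vanish bij_betw_apply[OF f] that by simp
  then have "vertex_matrix m f *\<^sub>v a = 0\<^sub>v (Suc m)"
    by (intro eq_vecI) auto
  moreover have "det (vertex_matrix m f) \<noteq> 0"
    using f assms(3,4) by (intro det_vertex_matrix_nonzero) (auto simp: bij_betw_def)
  ultimately show False
    using det_0_iff_vec_prod_zero[OF vertex_matrix_carrier] a \<open>a \<noteq> 0\<^sub>v (Suc m)\<close> by blast
qed

section \<open>Barycentric coordinates of an ordered simplex\<close>

locale ordered_simplex =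
  fixes n :: nat and p :: "nat \<Rightarrow> pt"
  assumes dim_pos: "1 \<le> n"
    and inj_vertices: "inj_on p {..n}"
    and vertices_in_Rn: "\<And>r. r \<le> n \<Longrightarrow> in_Rn n (p r)"
    and aff_indep_vertices: "aff_indep (p ` {..n})"
begin

abbreviation M :: "real mat" where "M \<equiv> vertex_matrix n p"

abbreviation D :: real where "D \<equiv> det M"

abbreviation P :: "pt set" where "P \<equiv> convc (p ` {..n})"

abbreviation F :: "nat \<Rightarrow> pt set" where "F j \<equiv> convc (p ` ({..n} - {j}))"

lemma D_nonzero: "D \<noteq> 0"
  using det_vertex_matrix_nonzero[OF inj_vertices vertices_in_Rn aff_indep_vertices] .

definition bary :: "nat \<Rightarrow> pt \<Rightarrow> real" where
  "bary r y = (\<Sum>c\<le>n. hcoord y c * cofactor M r c) / D"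

lemma sum_vertex_cofactor:
  assumes "r \<le> n" "s \<le> n"
  shows "(\<Sum>c\<le>n. hcoord (p s) c * cofactor M r c) = (if s = r then D else 0)"
proof -
  have "(\<Sum>c\<le>n. hcoord (p s) c * cofactor M r c) = (\<Sum>c<Suc n. M $$ (s, c) * cofactor M r c)"
    using assms(2) by (auto simp: lessThan_Suc_atMost vertex_matrix_def intro!: sum.cong)
  also have "\<dots> = (if s = r then D else 0)"
    by (rule cofactor_row_expansion_delta) (use assms in auto)
  finally show ?thesis .
qed

lemma bary_vertex: "r \<le> n \<Longrightarrow> s \<le> n \<Longrightarrow> bary r (p s) = (if r = s then 1 else 0)"
  using D_nonzero by (auto simp: bary_def sum_vertex_cofactor)

lemma sum_bary_hcoord:
  assumes "c \<le> n"
  shows "(\<Sum>r\<le>n. bary r y * hcoord (p r) c) = hcoord y c"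
proof -
  have column: "(\<Sum>r\<le>n. hcoord (p r) c * cofactor M r c') = (if c' = c then D else 0)"
    if "c' \<le> n" for c'
  proof -
    have "(\<Sum>r\<le>n. hcoord (p r) c * cofactor M r c') = (\<Sum>r<Suc n. M $$ (r, c) * cofactor M r c')"
      using assms by (auto simp: lessThan_Suc_atMost vertex_matrix_def intro!: sum.cong)
    also have "\<dots> = (if c' = c then D else 0)"
      by (rule cofactor_column_expansion_delta) (use assms that in auto)
    finally show ?thesis .
  qed
  have "(\<Sum>r\<le>n. bary r y * hcoord (p r) c)
      = (\<Sum>r\<le>n. \<Sum>c'\<le>n. hcoord y c' * (hcoord (p r) c * cofactor M r c')) / D"
    unfolding bary_def sum_divide_distrib sum_distrib_right
    by (intro sum.cong refl) (simp add: mult_ac)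
  also have "\<dots> = (\<Sum>c'\<le>n. hcoord y c' * (\<Sum>r\<le>n. hcoord (p r) c * cofactor M r c')) / D"
    by (subst sum.swap) (simp add: sum_distrib_left)
  also have "\<dots> = (\<Sum>c'\<le>n. if c' = c then hcoord y c * D else 0) / D"
    by (intro arg_cong[where f = "\<lambda>x. x / D"] sum.cong) (auto simp: column)
  also have "\<dots> = hcoord y c"
    using assms D_nonzero by simp
  finally show ?thesis .
qed

lemma sum_bary: "(\<Sum>r\<le>n. bary r y) = 1"
  using sum_bary_hcoord[of 0 y] by (simp add: hcoord_def)

lemma bary_comb:
  assumes "in_Rn n y"
  shows "(\<lambda>k. \<Sum>r\<le>n. bary r y * p r k) = y"
proof
  fix k
  show "(\<Sum>r\<le>n. bary r y * p r k) = y k"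
  proof (cases "1 \<le> k \<and> k \<le> n")
    case True
    then show ?thesis
      using sum_bary_hcoord[of k y] by (simp add: hcoord_def)
  next
    case False
    then have "p r k = 0" if "r \<le> n" for r
      using vertices_in_Rn[OF that] unfolding in_Rn_def by (cases "k = 0") auto
    moreover have "y k = 0"
      using assms False unfolding in_Rn_def by (cases "k = 0") auto
    ultimately show ?thesis
      by simp
  qed
qed

lemma bary_affine_comb:
  assumes "sum \<mu> T = 1"
  shows "bary r (\<lambda>k. \<Sum>t\<in>T. \<mu> t * q t k) = (\<Sum>t\<in>T. \<mu> t * bary r (q t))"
proof -
  have "bary r (\<lambda>k. \<Sum>t\<in>T. \<mu> t * q t k) = (\<Sum>t\<in>T. \<mu> t * (\<Sum>c\<le>n. hcoord (q t) c * cofactor M r c)) / D"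
    unfolding bary_def sum_hcoord_affine_comb[OF assms] ..
  also have "\<dots> = (\<Sum>t\<in>T. \<mu> t * (\<Sum>c\<le>n. hcoord (q t) c * cofactor M r c) / D)"
    by (rule sum_divide_distrib)
  finally show ?thesis
    by (simp add: bary_def)
qed

lemma bary_line: "bary r (\<lambda>k. (1 - a) * x k + a * w k) = (1 - a) * bary r x + a * bary r w"
proof -
  have "(\<Sum>c\<le>n. hcoord (\<lambda>k. (1 - a) * x k + a * w k) c * cofactor M r c)
      = (1 - a) * (\<Sum>c\<le>n. hcoord x c * cofactor M r c) + a * (\<Sum>c\<le>n. hcoord w c * cofactor M r c)"
    unfolding hcoord_line sum_distrib_left sum.distrib[symmetric] by (intro sum.cong) (simp_all add: algebra_simps)
  then show ?thesis
    unfolding bary_def by (simp add: add_divide_distrib)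
qed

lemma bary_vertex_comb:
  assumes "S \<subseteq> {..n}" "sum c S = 1" "r \<le> n"
  shows "bary r (\<lambda>k. \<Sum>s\<in>S. c s * p s k) = (if r \<in> S then c r else 0)"
proof -
  have "finite S"
    using assms(1) finite_subset by blast
  have "bary r (\<lambda>k. \<Sum>s\<in>S. c s * p s k) = (\<Sum>s\<in>S. c s * bary r (p s))"
    by (rule bary_affine_comb[OF assms(2)])
  also have "\<dots> = (\<Sum>s\<in>S. if s = r then c r else 0)"
    using assms(1,3) by (intro sum.cong) (auto simp: bary_vertex)
  finally show ?thesis
    using \<open>finite S\<close> by simp
qed

lemma mem_convc_vertices_iff:
  assumes S: "S \<subseteq> {..n}"
  shows "y \<in> convc (p ` S) \<longleftrightarrow>
    in_Rn n y \<and> (\<forall>r\<le>n. 0 \<le> bary r y) \<and> (\<forall>r\<in>{..n} - S. bary r y = 0)"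
    (is "_ \<longleftrightarrow> ?coords")
proof -
  have inj: "inj_on p S"
    using inj_on_subset[OF inj_vertices S] .
  show ?thesis
  proof
    assume "y \<in> convc (p ` S)"
    then obtain c where c: "\<forall>r\<in>S. 0 \<le> c r" "sum c S = 1" "y = (\<lambda>k. \<Sum>r\<in>S. c r * p r k)"
      using convc_image_iff[OF inj] by blast
    have "in_Rn n y"
      unfolding c(3) by (rule in_Rn_affine_comb) (use S vertices_in_Rn in blast)
    moreover have "bary r y = (if r \<in> S then c r else 0)" if "r \<le> n" for r
      unfolding c(3) by (rule bary_vertex_comb[OF S c(2) that])
    ultimately show ?coords
      using c(1) by simp
  next
    assume y: ?coords
    have "sum (\<lambda>r. bary r y) S = (\<Sum>r\<le>n. bary r y)"
      by (rule sum.mono_neutral_left) (use S y in auto)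
    then have sum_S: "sum (\<lambda>r. bary r y) S = 1"
      using sum_bary by simp
    have "(\<lambda>k. \<Sum>r\<in>S. bary r y * p r k) = (\<lambda>k. \<Sum>r\<le>n. bary r y * p r k)"
      by (rule ext, rule sum.mono_neutral_left) (use S y in auto)
    also have "\<dots> = y"
      using bary_comb y by blast
    finally have comb_S: "y = (\<lambda>k. \<Sum>r\<in>S. bary r y * p r k)"
      by (rule sym)
    have nonneg: "\<forall>r\<in>S. 0 \<le> bary r y"
      using S y by auto
    show "y \<in> convc (p ` S)"
      unfolding convc_image_iff[OF inj]
      by (rule exI[of _ "\<lambda>r. bary r y"]) (intro conjI nonneg sum_S comb_S)
  qed
qed

lemma mem_P_iff: "y \<in> P \<longleftrightarrow> in_Rn n y \<and> (\<forall>r\<le>n. 0 \<le> bary r y)"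
  using mem_convc_vertices_iff[of "{..n}"] by simp

lemma mem_F_iff:
  assumes "j \<le> n"
  shows "y \<in> F j \<longleftrightarrow> in_Rn n y \<and> (\<forall>r\<le>n. 0 \<le> bary r y) \<and> bary j y = 0"
proof -
  have "{..n} - ({..n} - {j}) = {j}"
    using assms by auto
  then show ?thesis
    using mem_convc_vertices_iff[of "{..n} - {j}"] by auto
qed

lemma F_subset_P: "j \<le> n \<Longrightarrow> F j \<subseteq> P"
  by (auto simp: mem_F_iff mem_P_iff)

lemma vertex_in_F: "j \<le> n \<Longrightarrow> r \<le> n \<Longrightarrow> r \<noteq> j \<Longrightarrow> p r \<in> F j"
  by (simp add: mem_F_iff bary_vertex vertices_in_Rn)

lemma affhull_F_bary:
  assumes "j \<le> n" "y \<in> affhull (F j)"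
  shows "in_Rn n y" "bary j y = 0"
proof -
  obtain T \<mu> where T: "finite T" "T \<subseteq> F j" "sum \<mu> T = 1" "y = (\<lambda>k. \<Sum>t\<in>T. \<mu> t * t k)"
    using assms(2) unfolding affhull_def by blast
  show "in_Rn n y"
    using T assms(1) by (auto simp: mem_F_iff intro!: in_Rn_affine_comb)
  have "bary j y = (\<Sum>t\<in>T. \<mu> t * bary j t)"
    using bary_affine_comb[OF T(3), of j "\<lambda>t. t"] T(4) by simp
  also have "\<dots> = 0"
    using T(2) assms(1) by (auto simp: mem_F_iff intro!: sum.neutral)
  finally show "bary j y = 0" .
qed

lemma bary_diff:
  "bary r y - bary r x = (\<Sum>c\<in>{1..n}. (y c - x c) * cofactor M r c) / D"
proof -
  have "{..n} = insert 0 {1..n}"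
    by auto
  then have "(\<Sum>c\<le>n. hcoord y c * cofactor M r c) - (\<Sum>c\<le>n. hcoord x c * cofactor M r c)
      = (\<Sum>c\<in>{1..n}. (y c - x c) * cofactor M r c)"
    by (simp add: hcoord_def left_diff_distrib flip: sum_subtractf)
  then show ?thesis
    unfolding bary_def diff_divide_distrib[symmetric] by simp
qed

lemma bary_lipschitz:
  obtains L where "0 < L" "\<And>r x y. r \<le> n \<Longrightarrow> \<bar>bary r x - bary r y\<bar> \<le> L * dist_n n x y"
proof
  define S where "S = (\<Sum>r\<le>n. \<Sum>c\<in>{1..n}. \<bar>cofactor M r c\<bar>)"
  have "0 \<le> S"
    unfolding S_def by (intro sum_nonneg) simp
  then show "0 < 1 + S / \<bar>D\<bar>"
    by (simp add: add_pos_nonneg)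
  fix r x y
  assume r: "r \<le> n"
  have "\<bar>\<Sum>c\<in>{1..n}. (y c - x c) * cofactor M r c\<bar> \<le> (\<Sum>c\<in>{1..n}. dist_n n x y * \<bar>cofactor M r c\<bar>)"
    by (rule order.trans[OF sum_abs sum_mono]) (auto simp: abs_mult intro!: mult_right_mono coord_le_dist_n)
  also have "\<dots> \<le> dist_n n x y * S"
    unfolding S_def sum_distrib_left[symmetric] using r
    by (intro mult_left_mono member_le_sum dist_n_nonneg) (auto intro: sum_nonneg)
  finally have "\<bar>bary r y - bary r x\<bar> \<le> dist_n n x y * S / \<bar>D\<bar>"
    unfolding bary_diff abs_divide using D_nonzero by (simp add: divide_right_mono)
  also have "\<dots> \<le> (1 + S / \<bar>D\<bar>) * dist_n n x y"
    using dist_n_nonneg[of n x y] by (simp add: algebra_simps)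
  finally show "\<bar>bary r x - bary r y\<bar> \<le> (1 + S / \<bar>D\<bar>) * dist_n n x y"
    by (simp add: abs_minus_commute)
qed

lemma bary_shift_last:
  assumes "\<And>k. 1 \<le> k \<Longrightarrow> k < n \<Longrightarrow> y k = x k"
  shows "bary r y - bary r x = cofactor M r n / D * (y n - x n)"
proof -
  have "(\<Sum>c\<in>{1..n}. (y c - x c) * cofactor M r c)
      = (\<Sum>c\<in>{1..n}. if c = n then (y n - x n) * cofactor M r n else 0)"
    using assms by (intro sum.cong) auto
  then show ?thesis
    using dim_pos by (simp add: bary_diff)
qed

end

section \<open>Signs of facets\<close>

lemma facet_sign_from_heights:
  fixes c :: real
  assumes "c \<noteq> 0" "F \<subseteq> P" "rel_interior_n d F \<noteq> {}"
    and below: "\<And>x z. x \<in> F \<Longrightarrow> z \<in> P \<Longrightarrow> proj (d - 1) z = proj (d - 1) x \<Longrightarrow> 0 \<le> c * (z d - x d)"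
    and lift: "\<And>x. x \<in> rel_interior_n d F \<Longrightarrow>
      \<exists>z\<in>P. proj (d - 1) z = proj (d - 1) x \<and> 0 < c * (z d - x d)"
  shows "facet_sign_is d P F (- sgn c)"
proof -
  have relint: "rel_interior_n d F \<subseteq> F"
    by (auto simp: rel_interior_n_def)
  show ?thesis
  proof (cases "0 < c")
    case True
    have "F \<subseteq> NB d P"
      using assms(2) below True by (force simp: NB_def zero_le_mult_iff)
    then have "negative_facet d P F"
      using assms(3) relint unfolding negative_facet_def by blast
    moreover have "\<not> positive_facet d P F"
      using lift True by (force simp: positive_facet_def PB_def zero_less_mult_iff)
    ultimately show ?thesis
      using True by (simp add: facet_sign_is_def)
  next
    case False
    then have "c < 0"
      using assms(1) by simp
    have "F \<subseteq> PB d P"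
      using assms(2) below \<open>c < 0\<close> by (force simp: PB_def zero_le_mult_iff)
    then have "positive_facet d P F"
      using assms(3) relint unfolding positive_facet_def by blast
    moreover have "\<not> negative_facet d P F"
      using lift \<open>c < 0\<close> by (force simp: negative_facet_def NB_def zero_less_mult_iff)
    ultimately show ?thesis
      using \<open>c < 0\<close> by (simp add: facet_sign_is_def)
  qed
qed

context ordered_simplex
begin

lemma bary_pos_if_rel_interior_F:
  assumes j: "j \<le> n" and x: "x \<in> rel_interior_n n (F j)" and r: "r \<in> {..n} - {j}"
  shows "0 < bary r x"
proof (rule ccontr)
  obtain e where xF: "x \<in> F j" and "0 < e"
    and near: "\<And>y. y \<in> affhull (F j) \<Longrightarrow> dist_n n x y < e \<Longrightarrow> y \<in> F j"
    using x unfolding rel_interior_n_def by blast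
  assume "\<not> 0 < bary r x"
  then have "bary r x = 0"
    using xF r j by (auto simp: mem_F_iff)
  define t where "t = e / (2 * (dist_n n x (p r) + 1))"
  have "0 < t"
    using \<open>0 < e\<close> dist_n_nonneg[of n x "p r"] by (simp add: t_def)
  have "t * dist_n n x (p r) \<le> t * (dist_n n x (p r) + 1)"
    using \<open>0 < t\<close> by simp
  also have "\<dots> = e / 2"
    using dist_n_nonneg[of n x "p r"] by (simp add: t_def field_simps)
  also have "\<dots> < e"
    using \<open>0 < e\<close> by simp
  finally have "t * dist_n n x (p r) < e" .
  \<comment> \<open>moving from \<open>x\<close> away from \<open>p r\<close> stays in the affine hull of \<open>F j\<close> but leaves \<open>F j\<close>\<close>
  define y where "y = (\<lambda>k. (1 - (- t)) * x k + (- t) * p r k)"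
  have "y \<in> affhull (F j)"
    unfolding y_def using xF vertex_in_F[OF j] r by (intro affhull_line) auto
  moreover have "dist_n n x y < e"
    unfolding y_def dist_n_line using \<open>0 < t\<close> \<open>t * dist_n n x (p r) < e\<close> by simp
  ultimately have "0 \<le> bary r y"
    using near r j by (auto simp: mem_F_iff)
  moreover have "bary r y = - t"
    unfolding y_def bary_line using \<open>bary r x = 0\<close> r bary_vertex by simp
  ultimately show False
    using \<open>0 < t\<close> by simp
qed

lemma rel_interior_F_if_bary_pos:
  assumes j: "j \<le> n" and xF: "x \<in> F j" and pos: "\<And>r. r \<in> {..n} - {j} \<Longrightarrow> 0 < bary r x"
  shows "x \<in> rel_interior_n n (F j)"
proof -
  obtain m where "0 < m" and m: "\<And>r. r \<in> {..n} - {j} \<Longrightarrow> m \<le> bary r x"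
    using finite_positive_lower_bound[of "{..n} - {j}" "\<lambda>r. bary r x"] pos by auto
  obtain L where "0 < L" and L: "\<And>r x y. r \<le> n \<Longrightarrow> \<bar>bary r x - bary r y\<bar> \<le> L * dist_n n x y"
    using bary_lipschitz by blast
  have "y \<in> F j" if y: "y \<in> affhull (F j)" "dist_n n x y < m / L" for y
  proof -
    have pos_y: "0 < bary r y" if r: "r \<in> {..n} - {j}" for r
    proof -
      have "bary r x - bary r y \<le> L * dist_n n x y"
        using L[of r x y] r by (simp add: abs_le_iff)
      also have "\<dots> < m"
        using y(2) \<open>0 < L\<close> by (simp add: pos_less_divide_eq mult.commute)
      finally show ?thesis
        using m[OF r] by linarith
    qed
    have "0 \<le> bary r y" if "r \<le> n" for r
      using pos_y[of r] affhull_F_bary[OF j y(1)] that by (cases "r = j") auto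
    then show "y \<in> F j"
      using affhull_F_bary[OF j y(1)] by (simp add: mem_F_iff[OF j])
  qed
  then show ?thesis
    unfolding rel_interior_n_def using xF \<open>0 < m\<close> \<open>0 < L\<close> by (auto intro!: exI[of _ "m / L"])
qed

lemma rel_interior_F_nonempty:
  assumes j: "j \<le> n"
  shows "rel_interior_n n (F j) \<noteq> {}"
proof -
  let ?S = "{..n} - {j}"
  have sum: "sum (\<lambda>_. 1 / real n) ?S = 1"
    using j dim_pos by simp
  define b where "b = (\<lambda>k. \<Sum>r\<in>?S. 1 / real n * p r k)"
  have "b \<in> F j"
    unfolding b_def convc_image_iff[OF inj_on_subset[OF inj_vertices Diff_subset]]
    by (rule exI[of _ "\<lambda>_. 1 / real n"]) (use sum in auto)
  moreover have "0 < bary r b" if "r \<in> ?S" for r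
    unfolding b_def using bary_vertex_comb[OF _ sum] that dim_pos by auto
  ultimately show ?thesis
    using rel_interior_F_if_bary_pos[OF j] by blast
qed

lemma vertical_move_keeps_bary_pos:
  assumes j: "j \<le> n" and x: "x \<in> rel_interior_n n (F j)"
  obtains \<epsilon> where "0 < \<epsilon>"
    "\<And>s r. \<bar>s\<bar> < \<epsilon> \<Longrightarrow> r \<in> {..n} - {j} \<Longrightarrow> 0 < bary r (x(n := x n + s))"
proof -
  obtain m where "0 < m" and m: "\<And>r. r \<in> {..n} - {j} \<Longrightarrow> m \<le> bary r x"
    using finite_positive_lower_bound[of "{..n} - {j}" "\<lambda>r. bary r x"]
      bary_pos_if_rel_interior_F[OF j x] by auto
  obtain L where "0 < L" and L: "\<And>r x y. r \<le> n \<Longrightarrow> \<bar>bary r x - bary r y\<bar> \<le> L * dist_n n x y"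
    using bary_lipschitz by blast
  show ?thesis
  proof (rule that[of "m / L"])
    show "0 < m / L"
      using \<open>0 < m\<close> \<open>0 < L\<close> by simp
    fix s r
    assume s: "\<bar>s\<bar> < m / L" and r: "r \<in> {..n} - {j}"
    have "bary r x - bary r (x(n := x n + s)) \<le> L * \<bar>s\<bar>"
      using L[of r x "x(n := x n + s)"] r dim_pos by (simp add: dist_n_update abs_le_iff)
    also have "\<dots> < m"
      using s \<open>0 < L\<close> by (simp add: pos_less_divide_eq mult.commute)
    finally show "0 < bary r (x(n := x n + s))"
      using m[OF r] by linarith
  qed
qed

lemma height_above_F:
  assumes j: "j \<le> n" and "x \<in> F j" "z \<in> P" "proj (n - 1) z = proj (n - 1) x"
  shows "0 \<le> cofactor M j n / D * (z n - x n)"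
proof -
  have "bary j z - bary j x = cofactor M j n / D * (z n - x n)"
    by (rule bary_shift_last) (use proj_eqD[OF assms(4)] in auto)
  moreover have "bary j x = 0"
    using assms(2) j by (simp add: mem_F_iff)
  moreover have "0 \<le> bary j z"
    using assms(3) j by (simp add: mem_P_iff)
  ultimately show ?thesis
    by simp
qed

lemma lift_from_rel_interior_F:
  assumes j: "j \<le> n" and cof: "cofactor M j n \<noteq> 0" and x: "x \<in> rel_interior_n n (F j)"
  shows "\<exists>z\<in>P. proj (n - 1) z = proj (n - 1) x \<and> 0 < cofactor M j n / D * (z n - x n)"
proof -
  define c where "c = cofactor M j n / D"
  have "c \<noteq> 0"
    using cof D_nonzero by (simp add: c_def)
  have xF: "x \<in> F j"
    using x by (simp add: rel_interior_n_def)
  obtain \<epsilon> where "0 < \<epsilon>"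
    and pos: "\<And>s r. \<bar>s\<bar> < \<epsilon> \<Longrightarrow> r \<in> {..n} - {j} \<Longrightarrow> 0 < bary r (x(n := x n + s))"
    using vertical_move_keeps_bary_pos[OF j x] by blast
  define z where "z = x(n := x n + sgn c * \<epsilon> / 2)"
  have height: "c * (z n - x n) = \<bar>c\<bar> * \<epsilon> / 2"
    using \<open>c \<noteq> 0\<close> by (simp add: z_def sgn_if)
  have "0 < \<bar>c\<bar> * \<epsilon> / 2"
    using \<open>c \<noteq> 0\<close> \<open>0 < \<epsilon>\<close> by simp
  have "bary j z - bary j x = c * (z n - x n)"
    unfolding c_def by (rule bary_shift_last) (simp add: z_def)
  then have "bary j z = \<bar>c\<bar> * \<epsilon> / 2"
    using height xF j by (simp add: mem_F_iff)
  then have bary_j: "0 \<le> bary j z"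
    using \<open>0 < \<bar>c\<bar> * \<epsilon> / 2\<close> by linarith
  have bary_other: "0 < bary r z" if "r \<in> {..n} - {j}" for r
    unfolding z_def using pos[OF _ that] \<open>c \<noteq> 0\<close> \<open>0 < \<epsilon>\<close> by (simp add: abs_mult)
  have "0 \<le> bary r z" if "r \<le> n" for r
    using bary_j bary_other[of r] that by (cases "r = j") auto
  moreover have "in_Rn n z"
    using xF j dim_pos by (auto simp: z_def in_Rn_def mem_F_iff)
  ultimately have "z \<in> P"
    by (simp add: mem_P_iff)
  moreover have "proj (n - 1) z = proj (n - 1) x"
  proof
    fix k
    show "proj (n - 1) z k = proj (n - 1) x k"
      using dim_pos by (auto simp: proj_def z_def)
  qed
  moreover have "0 < c * (z n - x n)"
    using height \<open>0 < \<bar>c\<bar> * \<epsilon> / 2\<close> by linarith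
  ultimately show ?thesis
    unfolding c_def by blast
qed

lemma facet_sign:
  assumes j: "j \<le> n" and cof: "cofactor M j n \<noteq> 0"
  shows "facet_sign_is n P (F j) (- sgn (cofactor M j n / D))"
proof (rule facet_sign_from_heights)
  show "cofactor M j n / D \<noteq> 0"
    using cof D_nonzero by simp
  show "F j \<subseteq> P"
    by (rule F_subset_P[OF j])
  show "rel_interior_n n (F j) \<noteq> {}"
    by (rule rel_interior_F_nonempty[OF j])
  show "\<And>x z. x \<in> F j \<Longrightarrow> z \<in> P \<Longrightarrow> proj (n - 1) z = proj (n - 1) x \<Longrightarrow>
      0 \<le> cofactor M j n / D * (z n - x n)"
    by (rule height_above_F[OF j])
  show "\<And>x. x \<in> rel_interior_n n (F j) \<Longrightarrow>
      \<exists>z\<in>P. proj (n - 1) z = proj (n - 1) x \<and> 0 < cofactor M j n / D * (z n - x n)"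
    by (rule lift_from_rel_interior_F[OF j cof])
qed

text \<open>
  A kernel vector of the minor of \<open>M\<close> at \<open>(j, n)\<close> is an affine functional of the first \<open>n - 1\<close>
  coordinates vanishing on \<open>F j\<close>, hence on the vertices of the \<open>(n - 1)\<close>-simplex that general
  position makes of the projection of \<open>F j\<close>; so it is zero.
\<close>

lemma minor_kernel_vanishes_on_F:
  assumes j: "j \<le> n" and a: "a \<in> carrier_vec n" "mat_delete M j n *\<^sub>v a = 0\<^sub>v n" and y: "y \<in> F j"
  shows "(\<Sum>c<n. hcoord y c * a $ c) = 0"
proof -
  have vertex: "(\<Sum>c<n. hcoord (p r) c * a $ c) = 0" if "r \<le> n" "r \<noteq> j" for r
  proof -
    have "(if r < j then r else r - 1) < n"
      using that j by auto
    then have "(mat_delete M j n *\<^sub>v a) $ (if r < j then r else r - 1) = 0"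
      using a(2) by simp
    then show ?thesis
      using mat_delete_vertex_matrix_mult_vec[OF j that a(1)] by simp
  qed
  from y obtain c where c: "sum c ({..n} - {j}) = 1" "y = (\<lambda>k. \<Sum>r\<in>{..n} - {j}. c r * p r k)"
    unfolding convc_image_iff[OF inj_on_subset[OF inj_vertices Diff_subset]] by blast
  have "(\<Sum>c<n. hcoord y c * a $ c) = (\<Sum>r\<in>{..n} - {j}. c r * (\<Sum>c<n. hcoord (p r) c * a $ c))"
    unfolding c(2) by (rule sum_hcoord_affine_comb[OF c(1)])
  also have "\<dots> = 0"
    using vertex by (intro sum.neutral) auto
  finally show ?thesis .
qed

lemma cofactor_last_nonzero:
  assumes j: "j \<le> n" and simplex: "is_simplex (n - 1) (proj (n - 1) ` F j)"
  shows "cofactor M j n \<noteq> 0"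
proof -
  let ?A = "mat_delete M j n"
  have n: "Suc (n - 1) = n" "{..<n} = {..n - 1}"
    using dim_pos by auto
  have carrier: "?A \<in> carrier_mat n n"
    using mat_delete_carrier[OF vertex_matrix_carrier, of n p j n] by simp
  have "det ?A \<noteq> 0"
  proof
    assume "det ?A = 0"
    then obtain a where a: "a \<in> carrier_vec n" "a \<noteq> 0\<^sub>v n" "?A *\<^sub>v a = 0\<^sub>v n"
      using det_0_iff_vec_prod_zero[OF carrier] by auto
    obtain W where W: "finite W" "card W = n - 1 + 1" "\<And>w. w \<in> W \<Longrightarrow> in_Rn (n - 1) w"
      "aff_indep W" "proj (n - 1) ` F j = convc W"
      using simplex unfolding is_simplex_def by blast
    have "a = 0\<^sub>v (Suc (n - 1))"
    proof (rule affine_functional_vanishing_zero[OF W(1) _ W(3,4)])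
      show "card W = Suc (n - 1)" and "a \<in> carrier_vec (Suc (n - 1))"
        using W(2) a(1) n(1) by simp_all
      fix w
      assume "w \<in> W"
      then have "w \<in> proj (n - 1) ` F j"
        unfolding W(5) by (rule mem_convc_self[OF W(1)])
      then obtain y where y: "y \<in> F j" and w: "w = proj (n - 1) y" ..
      have "(\<Sum>c\<le>n - 1. hcoord w c * a $ c) = (\<Sum>c\<le>n - 1. hcoord y c * a $ c)"
        unfolding w by (intro sum.cong) (auto simp: hcoord_def proj_def)
      also have "\<dots> = 0"
        using minor_kernel_vanishes_on_F[OF j a(1,3) y] unfolding n(2) .
      finally show "(\<Sum>c\<le>n - 1. hcoord w c * a $ c) = 0" .
    qed
    with a(2) n(1) show False
      by simp
  qed
  then show ?thesis
    by (simp add: cofactor_def)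
qed

end

section \<open>The vertex order of the theorem\<close>

text \<open>
  Vertex \<open>r\<close> (counted from \<open>0\<close>) of the order used by \<open>X(\<sigma>, k)\<close>. Since \<open>\<sigma>\<close> fixes \<open>d + 1\<close>,
  vertex \<open>d\<close> is \<open>v (d + 1)\<close>.
\<close>

definition permuted_vertices :: "(nat \<Rightarrow> pt) \<Rightarrow> (nat \<Rightarrow> nat) \<Rightarrow> nat \<Rightarrow> pt" where
  "permuted_vertices v \<sigma> = (\<lambda>r. v (\<sigma> (Suc r)))"

lemma image_permuted_vertices: "permuted_vertices v \<sigma> ` S = v ` (\<lambda>r. \<sigma> (Suc r)) ` S"
  by (simp add: permuted_vertices_def image_image)

lemma permutes_Suc_bij_betw:
  assumes "\<sigma> permutes {1..d}"
  shows "bij_betw (\<lambda>r. \<sigma> (Suc r)) {..d} {1..d + 1}"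
proof -
  have "bij_betw Suc {..d} {1..d + 1}"
    by (rule bij_betw_imageI) (simp_all add: image_Suc_atMost)
  moreover have "bij_betw \<sigma> {1..d + 1} {1..d + 1}"
    using permutes_imp_bij[OF permutes_subset[OF assms]] by simp
  ultimately have "bij_betw (\<sigma> \<circ> Suc) {..d} {1..d + 1}"
    by (rule bij_betw_trans)
  then show ?thesis
    by (simp add: comp_def)
qed

lemma image_permuted_vertices_atMost:
  "\<sigma> permutes {1..d} \<Longrightarrow> permuted_vertices v \<sigma> ` {..d} = vertices d v"
  using bij_betw_imp_surj_on[OF permutes_Suc_bij_betw] by (simp add: vertices_def image_permuted_vertices)

lemma ordered_simplex_permuted:
  assumes "1 \<le> d" "is_d_simplex d v" "\<sigma> permutes {1..d}"
  shows "ordered_simplex d (permuted_vertices v \<sigma>)"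
proof
  have bij: "bij_betw (\<lambda>r. \<sigma> (Suc r)) {..d} {1..d + 1}"
    by (rule permutes_Suc_bij_betw[OF assms(3)])
  have v: "inj_on v {1..d + 1}" "\<And>i. i \<in> {1..d + 1} \<Longrightarrow> in_Rn d (v i)" "aff_indep (vertices d v)"
    using assms(2) by (auto simp: is_d_simplex_def)
  show "1 \<le> d"
    by (fact assms(1))
  show "inj_on (permuted_vertices v \<sigma>) {..d}"
    using comp_inj_on[OF bij_betw_imp_inj_on[OF bij]] v(1) bij_betw_imp_surj_on[OF bij]
    by (simp add: permuted_vertices_def comp_def)
  show "in_Rn d (permuted_vertices v \<sigma> r)" if "r \<le> d" for r
    using v(2) bij_betw_apply[OF bij] that by (simp add: permuted_vertices_def)
  show "aff_indep (permuted_vertices v \<sigma> ` {..d})"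
    using v(3) image_permuted_vertices_atMost[OF assms(3)] by simp
qed

lemma image_permuted_vertices_remove:
  assumes "\<sigma> permutes {1..d}" "j \<le> d"
  shows "permuted_vertices v \<sigma> ` ({..d} - {j}) = v ` ({1..d + 1} - {\<sigma> (Suc j)})"
proof -
  have bij: "bij_betw (\<lambda>r. \<sigma> (Suc r)) {..d} {1..d + 1}"
    by (rule permutes_Suc_bij_betw[OF assms(1)])
  then have "(\<lambda>r. \<sigma> (Suc r)) ` ({..d} - {j}) = (\<lambda>r. \<sigma> (Suc r)) ` {..d} - {\<sigma> (Suc j)}"
    using assms(2) by (subst inj_on_image_set_diff[of _ "{..d}"]) (auto simp: bij_betw_def)
  also have "\<dots> = {1..d + 1} - {\<sigma> (Suc j)}"
    using bij by (simp add: bij_betw_def)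
  finally have "(\<lambda>r. \<sigma> (Suc r)) ` ({..d} - {j}) = {1..d + 1} - {\<sigma> (Suc j)}" .
  then show ?thesis
    by (simp add: image_permuted_vertices)
qed

lemma vertex_matrix_permuted:
  assumes "\<sigma> permutes {1..d}"
  shows "vertex_matrix d (permuted_vertices v \<sigma>) = mat (Suc d) (Suc d) (\<lambda>(r, c). Xmat d v \<sigma> d r c)"
proof -
  have "\<sigma> (Suc d) = Suc d"
    using assms by (simp add: permutes_not_in)
  then show ?thesis
    by (intro eq_matI) (auto simp: vertex_matrix_def Xmat_def hcoord_def permuted_vertices_def less_Suc_eq)
qed

lemma det_vertex_matrix_permuted:
  "\<sigma> permutes {1..d} \<Longrightarrow> det (vertex_matrix d (permuted_vertices v \<sigma>)) = detX d v \<sigma> d"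
  by (simp add: vertex_matrix_permuted detX_def detn_eq_det)

lemma cofactor_vertex_matrix_permuted_penultimate:
  assumes "1 \<le> d" "\<sigma> permutes {1..d}"
  shows "cofactor (vertex_matrix d (permuted_vertices v \<sigma>)) (d - 1) d = - detX d v \<sigma> (d - 1)"
proof -
  have last: "\<sigma> (Suc (Suc r)) = Suc d" if "r < d" "\<not> r < d - 1" for r
  proof -
    have "Suc r = d"
      using that by linarith
    then show ?thesis
      using assms(2) by (simp add: permutes_not_in)
  qed
  have "mat_delete (vertex_matrix d (permuted_vertices v \<sigma>)) (d - 1) d
      = mat d d (\<lambda>(r, c). Xmat d v \<sigma> (d - 1) r c)"
    by (intro eq_matI) (auto simp: mat_delete_def vertex_matrix_def Xmat_def hcoord_def permuted_vertices_def last)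
  moreover have "odd (d - 1 + d)"
    using assms(1) by presburger
  ultimately show ?thesis
    using assms(1) by (simp add: cofactor_def detX_def detn_eq_det)
qed

lemma cofactor_vertex_matrix_permuted_last:
  "cofactor (vertex_matrix d (permuted_vertices v \<sigma>)) d d = detY v \<sigma> d"
proof -
  have "mat_delete (vertex_matrix d (permuted_vertices v \<sigma>)) d d = mat d d (\<lambda>(r, c). Ymat v \<sigma> r c)"
    by (intro eq_matI) (auto simp: mat_delete_def vertex_matrix_def Ymat_def hcoord_def permuted_vertices_def)
  then show ?thesis
    by (simp add: cofactor_def detY_def detn_eq_det)
qed

lemma facet_sign_permuted:
  assumes "1 \<le> d" "is_d_simplex d v" "general_position d v" "\<sigma> permutes {1..d}" "j \<le> d"
  shows "facet_sign_is d (simplexP d v) (facet d v (\<sigma> (Suc j)))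
    (- sgn (cofactor (vertex_matrix d (permuted_vertices v \<sigma>)) j d / detX d v \<sigma> d))"
proof -
  interpret ordered_simplex d "permuted_vertices v \<sigma>"
    by (rule ordered_simplex_permuted[OF assms(1,2,4)])
  have P: "P = simplexP d v"
    by (simp add: simplexP_def image_permuted_vertices_atMost[OF assms(4)])
  have F: "F j = facet d v (\<sigma> (Suc j))"
    by (simp add: facet_def image_permuted_vertices_remove[OF assms(4,5)])
  have "permuted_vertices v \<sigma> ` ({..d} - {j}) \<subseteq> vertices d v"
    unfolding image_permuted_vertices_atMost[OF assms(4), symmetric] by blast
  moreover have "card (permuted_vertices v \<sigma> ` ({..d} - {j})) = d - 1 + 1"
    using card_image[OF inj_on_subset[OF inj_vertices Diff_subset]] assms(1,5) by simp
  ultimately have "is_simplex (d - 1) (proj (d - 1) ` F j)"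
    using assms(1,3) unfolding general_position_def by simp
  then have "cofactor M j d \<noteq> 0"
    by (rule cofactor_last_nonzero[OF assms(5)])
  from facet_sign[OF assms(5) this] show ?thesis
    unfolding P F det_vertex_matrix_permuted[OF assms(4)] .
qed

lemma facet_sign_opposite_sigma_d:
  assumes "1 \<le> d" "is_d_simplex d v" "general_position d v" "\<sigma> permutes {1..d}"
  shows "facet_sign_is d (simplexP d v) (facet d v (\<sigma> d)) (sgn (detX d v \<sigma> d / detX d v \<sigma> (d - 1)))"
proof -
  have "facet_sign_is d (simplexP d v) (facet d v (\<sigma> (Suc (d - 1))))
      (- sgn (- detX d v \<sigma> (d - 1) / detX d v \<sigma> d))"
    using facet_sign_permuted[OF assms, of "d - 1"]
    unfolding cofactor_vertex_matrix_permuted_penultimate[OF assms(1,4)] by simp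
  then show ?thesis
    using assms(1) by (simp add: mult.commute)
qed

lemma facet_sign_opposite_last:
  assumes "1 \<le> d" "is_d_simplex d v" "general_position d v" "\<sigma> permutes {1..d}"
  shows "facet_sign_is d (simplexP d v) (facet d v (d + 1)) (- sgn (detX d v \<sigma> d / detY v \<sigma> d))"
proof -
  have "\<sigma> (Suc d) = d + 1"
    using assms(4) by (simp add: permutes_not_in)
  with facet_sign_permuted[OF assms order.refl]
  have "facet_sign_is d (simplexP d v) (facet d v (d + 1)) (- sgn (detY v \<sigma> d / detX d v \<sigma> d))"
    unfolding cofactor_vertex_matrix_permuted_last by simp
  then show ?thesis
    by (simp add: mult.commute)
qed

theorem mainTheorem7:
  fixes d :: nat and v :: "nat \<Rightarrow> pt"
  assumes "2 \<le> d"
    and "is_d_simplex d v"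
    and "general_position d v"
  shows "(\<forall>i\<in>{1..d}. \<forall>\<sigma>. \<sigma> permutes {1..d} \<and> \<sigma> d = i \<longrightarrow>
            facet_sign_is d (simplexP d v) (facet d v i)
              (sgn (detX d v \<sigma> d / detX d v \<sigma> (d - 1))))
       \<and> (\<forall>\<sigma>. \<sigma> permutes {1..d} \<longrightarrow>
            facet_sign_is d (simplexP d v) (facet d v (d + 1))
              (- sgn (detX d v \<sigma> d / detY v \<sigma> d))
            \<and> - sgn (detX d v \<sigma> d / detY v \<sigma> d) = - sgn (zval d v \<sigma> d))"
proof -
  have d: "1 \<le> d"
    using assms(1) by simp
  show ?thesis
    using facet_sign_opposite_sigma_d[OF d assms(2,3)] facet_sign_opposite_last[OF d assms(2,3)]
    by (auto simp: zval_def)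
qed

end
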